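(* Let $m\in\mathbb{N}$ be even and let $q(x)\in\mathbb{R}[x]$ have odd degree with $q(x)\ge0$ on $[0,1]$. Let $K=\{(x,y)\in\mathbb{R}^2: 0\le x\le1,\ y^m\ge q(x),\ y\ge0\}$. Then there is no finite set $S\subseteq\mathbb{R}[x,y]$ with $K_S=K$ such that the preordering $T_S$ is saturated.
   Context: For a finite set $S=\{g_1,\dots,g_s\}\subseteq\mathbb{R}[x,y]$, $K_S=\{p\in\mathbb{R}^2: g_i(p)\ge0\ \forall i\}$, and the preordering $T_S$ is the set of all $\sum_{e\in\{0,1\}^s}\sigma_e g_1^{e_1}\cdots g_s^{e_s}$ with each $\sigma_e$ a sum of squares in $\mathbb{R}[x,y]$. $T_S$ is saturated if it contains every $f\in\mathbb{R}[x,y]$ that is non-negative on $K_S$. *)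

theory Defs
  imports "HOL-Computational_Algebra.Polynomial"
begin

text \<open>Bivariate real polynomials R[x,y] are represented as R[x][y], i.e. polynomials
  in y whose coefficients are polynomials in x.\<close>
type_synonym bpoly = "real poly poly"

definition eval2 :: "bpoly \<Rightarrow> real \<Rightarrow> real \<Rightarrow> real" where
  "eval2 p a b = poly (map_poly (\<lambda>c. poly c a) p) b"

definition sos :: "bpoly \<Rightarrow> bool" where
  "sos f \<longleftrightarrow> (\<exists>gs. f = sum_list (map (\<lambda>g. g ^ 2) gs))"

definition KS :: "bpoly set \<Rightarrow> (real \<times> real) set" where
  "KS S = {(a, b). \<forall>g\<in>S. eval2 g a b \<ge> 0}"

definition preordering :: "bpoly set \<Rightarrow> bpoly set" where
  "preordering S = {f. \<exists>\<sigma>. (\<forall>E\<subseteq>S. sos (\<sigma> E)) \<and> f = (\<Sum>E\<in>Pow S. \<sigma> E * \<Prod>E)}"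

definition saturated :: "bpoly set \<Rightarrow> bool" where
  "saturated S \<longleftrightarrow>
     (\<forall>f. (\<forall>(a, b)\<in>KS S. eval2 f a b \<ge> 0) \<longrightarrow> f \<in> preordering S)"

end

theory Submission
  imports Defs "HOL-Computational_Algebra.Fundamental_Theorem_Algebra"
begin

text \<open>
  With \<open>b = root m \<circ> q\<close>, the set K is the epigraph of b over [0,1]. If T_S were saturated,
  then for every polynomial h touching b from below at a point a, the polynomial y - h(x) would
  lie in T_S. Restricting such a representation to the line x = a writes y - b(a) as a sum of
  polynomials in y that are nonnegative on the ray y \<ge> b(a); each summand is then a multiple
  of y - b(a), and since a sum of squares cannot be linear, some product of generators restricts
  to \<open>\<alpha> (y - b(a))\<close> with \<open>\<alpha> \<noteq> 0\<close>. If \<open>B(x) + A(x) y + \<dots>\<close> is that product, this means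
  \<open>q(a) A(a)^m = B(a)^m\<close> and \<open>A(a) \<noteq> 0\<close>. Comparing degrees, \<open>q A^m = B^m\<close> with \<open>A \<noteq> 0\<close> is impossible for odd
  deg q and even m, so this happens only at finitely many a; but touching points are dense,
  since b plus a steep parabola attains its minimum near the apex of the parabola.
\<close>

lemma eval2_eq_poly_poly: "eval2 p a b = poly (poly p [:b:]) a"
  by (induct p) (simp_all add: eval2_def map_poly_pCons)

lemma eval2_mult: "eval2 (p * q) a b = eval2 p a b * eval2 q a b"
  by (simp add: eval2_eq_poly_poly)

lemma eval2_sum: "eval2 (\<Sum>i\<in>A. f i) a b = (\<Sum>i\<in>A. eval2 (f i) a b)"
  by (simp add: eval2_eq_poly_poly poly_sum)

lemma eval2_prod: "eval2 (\<Prod>i\<in>A. f i) a b = (\<Prod>i\<in>A. eval2 (f i) a b)"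
  by (simp add: eval2_eq_poly_poly poly_prod)

lemma sos_eval2_nonneg:
  assumes "sos f"
  shows "0 \<le> eval2 f a b"
proof -
  obtain gs where "f = sum_list (map (\<lambda>g. g ^ 2) gs)"
    using assms by (auto simp: sos_def)
  then show ?thesis
    by (induct gs arbitrary: f) (auto simp: eval2_eq_poly_poly)
qed

lemma degree_eq_0_if_bounded_at_top:
  fixes p :: "real poly"
  assumes "\<And>y. y \<ge> y0 \<Longrightarrow> \<bar>poly p y\<bar> \<le> B"
  shows "degree p = 0"
proof (rule ccontr)
  assume "degree p \<noteq> 0"
  obtain c r where p: "p = pCons c r"
    by (cases p)
  with \<open>degree p \<noteq> 0\<close> have "r \<noteq> 0"
    by auto
  then obtain R where R: "\<And>z. R \<le> \<bar>z\<bar> \<Longrightarrow> B + 1 \<le> \<bar>poly p z\<bar>"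
    using poly_infinity[of r "B + 1" c] by (auto simp: p)
  have "B + 1 \<le> \<bar>poly p (max y0 R)\<bar>"
    by (rule R) linarith
  with assms[of "max y0 R"] show False
    by simp
qed

lemma degree_le_1_if_linearly_bounded_at_top:
  fixes p :: "real poly"
  assumes "\<And>y. y \<ge> y0 \<Longrightarrow> \<bar>poly p y\<bar> \<le> c * y + d"
  shows "degree p \<le> 1"
proof -
  obtain c0 p1 where p: "p = pCons c0 p1"
    by (cases p)
  have "degree p1 = 0"
  proof (rule degree_eq_0_if_bounded_at_top)
    fix y :: real
    assume y: "y \<ge> max 1 y0"
    have "y * \<bar>poly p1 y\<bar> = \<bar>poly p y - c0\<bar>"
      using y by (simp add: p abs_mult)
    also have "\<dots> \<le> c * y + d + \<bar>c0\<bar>"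
      using assms[of y] y by linarith
    also have "\<dots> \<le> y * (\<bar>c\<bar> + \<bar>d\<bar> + \<bar>c0\<bar>)"
    proof -
      have "c * y \<le> \<bar>c\<bar> * y" "1 * (\<bar>d\<bar> + \<bar>c0\<bar>) \<le> y * (\<bar>d\<bar> + \<bar>c0\<bar>)"
        using y by (intro mult_right_mono; simp)+
      then show ?thesis
        by (simp add: algebra_simps)
    qed
    finally show "\<bar>poly p1 y\<bar> \<le> \<bar>c\<bar> + \<bar>d\<bar> + \<bar>c0\<bar>"
      using y by (simp add: mult_le_cancel_left_pos)
  qed
  then show ?thesis
    using degree_pCons_le[of c0 p1] by (simp add: p)
qed

lemma degree_eq_0_if_nonneg_degree_le_1:
  fixes p :: "real poly"
  assumes "degree p \<le> 1" and "\<And>y. poly p y \<ge> 0"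
  shows "degree p = 0"
proof (rule ccontr)
  assume "degree p \<noteq> 0"
  with assms(1) have "degree p = 1"
    by simp
  then obtain a b where p: "p = [:b, a:]" and "a \<noteq> 0"
    by (rule degree1_coeffs)
  then have "poly p (- (b + 1) / a) = -1"
    by simp
  with assms(2)[of "- (b + 1) / a"] show False
    by simp
qed

lemma linear_summand_of_linear_sum:
  fixes T :: "'i \<Rightarrow> real poly"
  assumes "finite I"
    and sum: "\<And>y. (\<Sum>i\<in>I. poly (T i) y) = y - y0"
    and nonneg: "\<And>i y. i \<in> I \<Longrightarrow> y \<ge> y0 \<Longrightarrow> poly (T i) y \<ge> 0"
    and "i \<in> I"
  shows "T i = smult (coeff (T i) 1) [:-y0, 1:]"
proof -
  have summand_le: "poly (T i) y \<le> y - y0" if "y \<ge> y0" for y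
    using member_le_sum[of i I "\<lambda>i. poly (T i) y"] assms that by simp
  have root: "poly (T i) y0 = 0"
    using sum_nonneg_eq_0_iff[OF \<open>finite I\<close>, of "\<lambda>i. poly (T i) y0"] sum nonneg \<open>i \<in> I\<close>
    by simp
  have deg: "degree (T i) \<le> 1"
    by (rule degree_le_1_if_linearly_bounded_at_top[of y0 _ 1 "- y0"])
      (use summand_le nonneg \<open>i \<in> I\<close> in auto)
  then have lin: "T i = [:coeff (T i) 0, coeff (T i) 1:]"
    by (intro poly_eqI) (auto simp: coeff_pCons coeff_eq_0 split: nat.split)
  have "poly (T i) y0 = coeff (T i) 0 + y0 * coeff (T i) 1"
    by (subst lin) simp
  with root have "coeff (T i) 0 = - y0 * coeff (T i) 1"
    by simp
  then show ?thesis
    by (subst lin) simp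
qed

lemma linear_factor_if_nonneg_cofactor:
  fixes P G :: "real poly"
  assumes PG: "P * G = smult c [:- y0, 1:]" and "c \<noteq> 0" and "\<And>y. poly P y \<ge> 0"
  obtains \<alpha> where "\<alpha> \<noteq> 0" and "G = [:- \<alpha> * y0, \<alpha>:]"
proof -
  have "P \<noteq> 0" and "G \<noteq> 0"
    using PG \<open>c \<noteq> 0\<close> by auto
  then have "degree P \<le> 1"
    using arg_cong[OF PG, of degree] \<open>c \<noteq> 0\<close> by (simp add: degree_mult_eq)
  then have "degree P = 0"
    using assms(3) by (rule degree_eq_0_if_nonneg_degree_le_1)
  then obtain s where s: "P = [:s:]"
    by (meson degree0_coeffs)
  with \<open>P \<noteq> 0\<close> have "s \<noteq> 0"
    by simp
  from PG have "smult (1 / s) (smult s G) = smult (c / s) [:- y0, 1:]"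
    by (simp add: s)
  then have "G = [:- (c / s) * y0, c / s:]"
    using \<open>s \<noteq> 0\<close> by simp
  with \<open>c \<noteq> 0\<close> \<open>s \<noteq> 0\<close> show thesis
    using that by simp
qed

lemma preordering_product_linear_on_ray:
  assumes "finite S" and "f \<in> preordering S"
    and f: "\<And>y. eval2 f a y = y - y0"
    and ray: "\<And>y. y \<ge> y0 \<Longrightarrow> (a, y) \<in> KS S"
  obtains E \<alpha> where "E \<subseteq> S" and "\<alpha> \<noteq> 0"
    and "map_poly (\<lambda>c. poly c a) (\<Prod>E) = [:- \<alpha> * y0, \<alpha>:]"
proof -
  obtain \<sigma> where sos: "\<And>E. E \<subseteq> S \<Longrightarrow> sos (\<sigma> E)"
    and f_eq: "f = (\<Sum>E\<in>Pow S. \<sigma> E * \<Prod>E)"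
    using assms(2) unfolding preordering_def by blast
  define r where "r p = map_poly (\<lambda>c. poly c a) p" for p :: bpoly
  have poly_r: "poly (r p) y = eval2 p a y" for p y
    by (simp add: r_def eval2_def)
  define T where "T E = r (\<sigma> E) * r (\<Prod>E)" for E
  have sum_T: "(\<Sum>E\<in>Pow S. poly (T E) y) = y - y0" for y
    using f[of y] by (simp add: f_eq T_def poly_r eval2_sum eval2_mult)
  have T_nonneg: "poly (T E) y \<ge> 0" if "E \<in> Pow S" and "y \<ge> y0" for E y
  proof -
    have "\<forall>g\<in>S. eval2 g a y \<ge> 0"
      using ray[OF \<open>y \<ge> y0\<close>] by (simp add: KS_def)
    then have "eval2 (\<Prod>E) a y \<ge> 0"
      using that eval2_prod[of "\<lambda>g. g" E a y] by (auto intro: prod_nonneg)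
    then show ?thesis
      using sos_eval2_nonneg[OF sos] that by (simp add: T_def poly_r)
  qed
  obtain E where E: "E \<in> Pow S" and "T E \<noteq> 0"
  proof (rule ccontr)
    assume "\<not> thesis"
    with that have "\<forall>E\<in>Pow S. T E = 0"
      by blast
    with sum_T[of "y0 + 1"] show False
      by simp
  qed
  have T_E: "T E = smult (coeff (T E) 1) [:- y0, 1:]"
    by (rule linear_summand_of_linear_sum[OF _ sum_T T_nonneg E]) (use assms(1) in simp)
  obtain \<alpha> where "\<alpha> \<noteq> 0" and "r (\<Prod>E) = [:- \<alpha> * y0, \<alpha>:]"
  proof (rule linear_factor_if_nonneg_cofactor)
    show "r (\<sigma> E) * r (\<Prod>E) = smult (coeff (T E) 1) [:- y0, 1:]"
      using T_E by (simp add: T_def)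
    show "coeff (T E) 1 \<noteq> 0"
      using T_E \<open>T E \<noteq> 0\<close> by auto
    show "poly (r (\<sigma> E)) y \<ge> 0" for y
      using sos_eval2_nonneg[OF sos] E by (simp add: poly_r)
  qed
  with E show thesis
    using that by (auto simp: r_def)
qed

lemma dvd_degree_if_mult_power_eq_power:
  fixes q A B :: "'a::idom poly"
  assumes "q * A ^ m = B ^ m" and "q \<noteq> 0" and "A \<noteq> 0"
  shows "m dvd degree q"
proof -
  have "B \<noteq> 0 \<or> m = 0"
    using assms by (metis mult_eq_0_iff power_0_left power_not_zero)
  then have "degree q + m * degree A = m * degree B"
    using arg_cong[OF assms(1), of degree] assms(2,3)
    by (auto simp: degree_mult_eq degree_power_eq)
  then show ?thesis
    by (metis dvd_add_left_iff dvd_triv_left)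
qed

lemma finite_points_mult_power_eq_power:
  fixes q A B :: "real poly"
  assumes "odd (degree q)" and "even m"
  shows "finite {x. poly A x \<noteq> 0 \<and> poly q x * poly A x ^ m = poly B x ^ m}"
proof (cases "A = 0")
  case False
  have "q \<noteq> 0"
    using assms(1) by auto
  then have "q * A ^ m - B ^ m \<noteq> 0"
    using dvd_degree_if_mult_power_eq_power[of q A m B] False assms
    by (auto intro: dvd_trans)
  from poly_roots_finite[OF this] show ?thesis
    by (rule finite_subset[rotated]) auto
qed simp

lemma interval_disjoint_finite_set:
  fixes Z :: "real set"
  assumes "finite Z" and "l < u"
  obtains t where "l < t" and "t \<le> u" and "{l<..<t} \<inter> Z = {}"
proof
  define t where "t = Min (insert u (Z \<inter> {l<..}))"
  show "l < t" and "t \<le> u"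
    using assms by (auto simp: t_def)
  show "{l<..<t} \<inter> Z = {}"
    using assms by (auto simp: t_def)
qed

lemma polynomial_touching_from_below:
  fixes b :: "real \<Rightarrow> real"
  assumes "continuous_on {l..u} b" and "l \<le> s" and "s < t" and "t \<le> u"
  obtains a h where "s < a" and "a < t" and "poly h a = b a"
    and "\<And>x. x \<in> {l..u} \<Longrightarrow> poly h x \<le> b x"
proof -
  define \<theta> where "\<theta> = (s + t) / 2"
  define \<delta> where "\<delta> = (t - s) / 2"
  have \<theta>: "\<theta> \<in> {l..u}" and "\<delta> > 0"
    using assms by (auto simp: \<theta>_def \<delta>_def)
  obtain x\<^sub>0 where "x\<^sub>0 \<in> {l..u}" and b_min: "\<And>x. x \<in> {l..u} \<Longrightarrow> b x\<^sub>0 \<le> b x"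
    using continuous_attains_inf[OF compact_Icc _ assms(1)] \<theta> by auto
  define K where "K = (b \<theta> - b x\<^sub>0 + 1) / \<delta>\<^sup>2"
  have "K > 0"
    using b_min[OF \<theta>] \<open>\<delta> > 0\<close> by (simp add: K_def)
  define F where "F x = b x + K * (x - \<theta>)\<^sup>2" for x
  have "continuous_on {l..u} F"
    unfolding F_def by (intro continuous_intros assms(1))
  then obtain a where a: "a \<in> {l..u}" and F_min: "\<And>x. x \<in> {l..u} \<Longrightarrow> F a \<le> F x"
    using continuous_attains_inf[OF compact_Icc] \<theta> by (metis empty_iff)
  have "K * (a - \<theta>)\<^sup>2 \<le> b \<theta> - b x\<^sub>0"
    using F_min[OF \<theta>] b_min[OF a] by (simp add: F_def)
  also have "\<dots> < K * \<delta>\<^sup>2"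
    using \<open>\<delta> > 0\<close> by (simp add: K_def)
  finally have "(a - \<theta>)\<^sup>2 < \<delta>\<^sup>2"
    using \<open>K > 0\<close> by simp
  then have "\<bar>a - \<theta>\<bar> < \<delta>"
    using \<open>\<delta> > 0\<close> by (metis power2_abs power2_less_imp_less less_imp_le)
  then have "s < a" and "a < t"
    unfolding abs_less_iff \<theta>_def \<delta>_def by (simp_all add: field_simps)
  define h where "h = [:F a:] - smult K ([:- \<theta>, 1:]\<^sup>2)"
  have poly_h: "poly h x = F a - K * (x - \<theta>)\<^sup>2" for x
    by (simp add: h_def power2_eq_square algebra_simps)
  show thesis
  proof (rule that[OF \<open>s < a\<close> \<open>a < t\<close>])
    show "poly h a = b a"
      by (simp add: poly_h F_def)
    show "poly h x \<le> b x" if "x \<in> {l..u}" for x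
      using F_min[OF that] by (simp add: poly_h F_def)
  qed
qed

lemma saturated_epigraph_linear_product:
  fixes b :: "real \<Rightarrow> real"
  assumes "finite S" and "saturated S"
    and K: "KS S = {(x, y). x \<in> {0..1} \<and> b x \<le> y}"
    and "continuous_on {0..1} b" and "0 \<le> s" and "s < t" and "t \<le> 1"
  obtains a E \<alpha> where "s < a" and "a < t" and "E \<subseteq> S" and "\<alpha> \<noteq> 0"
    and "map_poly (\<lambda>c. poly c a) (\<Prod>E) = [:- \<alpha> * b a, \<alpha>:]"
proof -
  obtain a h where "s < a" and "a < t" and touch: "poly h a = b a"
    and below: "\<And>x. x \<in> {0..1} \<Longrightarrow> poly h x \<le> b x"
    using polynomial_touching_from_below[OF assms(4-7)] by blast
  have "\<forall>(x, y)\<in>KS S. eval2 [:- h, 1:] x y \<ge> 0"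
    using below by (force simp: K eval2_eq_poly_poly)
  with \<open>saturated S\<close> have "[:- h, 1:] \<in> preordering S"
    unfolding saturated_def by blast
  then obtain E \<alpha> where "E \<subseteq> S" and "\<alpha> \<noteq> 0"
    and "map_poly (\<lambda>c. poly c a) (\<Prod>E) = [:- \<alpha> * b a, \<alpha>:]"
  proof (rule preordering_product_linear_on_ray[OF \<open>finite S\<close>])
    show "eval2 [:- h, 1:] a y = y - b a" for y
      by (simp add: eval2_eq_poly_poly touch)
    show "(a, y) \<in> KS S" if "b a \<le> y" for y
      using that \<open>s < a\<close> \<open>a < t\<close> assms(5,7) by (simp add: K)
  qed
  with \<open>s < a\<close> \<open>a < t\<close> show thesis
    using that by blast
qed

lemma root_le_iff_le_power:
  assumes "0 < m" and "0 \<le> c"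
  shows "root m c \<le> y \<longleftrightarrow> c \<le> y ^ m \<and> 0 \<le> y"
proof
  assume "root m c \<le> y"
  moreover have "0 \<le> root m c"
    using assms(2) by (rule real_root_ge_zero)
  ultimately have "root m c ^ m \<le> y ^ m" and "0 \<le> y"
    by (auto intro: power_mono)
  then show "c \<le> y ^ m \<and> 0 \<le> y"
    using assms by simp
next
  assume "c \<le> y ^ m \<and> 0 \<le> y"
  then show "root m c \<le> y"
    using assms real_root_le_mono[of m c "y ^ m"] by (simp add: real_root_power_cancel)
qed

theorem proposition3:
  fixes m :: nat and q :: "real poly"
  assumes "even m" and "m > 0"
    and "odd (degree q)"
    and "\<forall>x\<in>{0..1}. poly q x \<ge> 0"
  shows "\<not> (\<exists>S. finite S \<and>
              KS S = {(x, y). 0 \<le> x \<and> x \<le> 1 \<and> y ^ m \<ge> poly q x \<and> y \<ge> 0} \<and>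
              saturated S)"
proof
  assume "\<exists>S. finite S \<and>
              KS S = {(x, y). 0 \<le> x \<and> x \<le> 1 \<and> y ^ m \<ge> poly q x \<and> y \<ge> 0} \<and>
              saturated S"
  then obtain S where "finite S" and "saturated S"
    and K: "KS S = {(x, y). 0 \<le> x \<and> x \<le> 1 \<and> y ^ m \<ge> poly q x \<and> y \<ge> 0}"
    by blast
  define b where "b x = root m (poly q x)" for x
  have epigraph: "KS S = {(x, y). x \<in> {0..1} \<and> b x \<le> y}"
    using assms(2,4) by (auto simp: K b_def root_le_iff_le_power)
  have "continuous_on {0..1} b"
    unfolding b_def by (intro continuous_intros)
  define bad where "bad = (\<Union>E\<in>Pow S. {x. poly (coeff (\<Prod>E) 1) x \<noteq> 0 \<and>
      poly q x * poly (coeff (\<Prod>E) 1) x ^ m = poly (coeff (\<Prod>E) 0) x ^ m})"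
  have "finite bad"
    unfolding bad_def using \<open>finite S\<close> finite_points_mult_power_eq_power[OF assms(3,1)] by blast
  then obtain t where "0 < t" and "t \<le> 1" and good: "{0<..<t} \<inter> bad = {}"
    using interval_disjoint_finite_set[of bad 0 1] by auto
  obtain a E \<alpha> where "0 < a" and "a < t" and "E \<subseteq> S" and "\<alpha> \<noteq> 0"
    and linear: "map_poly (\<lambda>c. poly c a) (\<Prod>E) = [:- \<alpha> * b a, \<alpha>:]"
    using saturated_epigraph_linear_product[OF \<open>finite S\<close> \<open>saturated S\<close> epigraph
        \<open>continuous_on {0..1} b\<close> order.refl \<open>0 < t\<close> \<open>t \<le> 1\<close>]
    by blast
  have "poly (coeff (\<Prod>E) n) a = coeff [:- \<alpha> * b a, \<alpha>:] n" for n
    using coeff_map_poly[of "\<lambda>c. poly c a" "\<Prod>E" n] by (simp add: linear)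
  from this[of 0] this[of 1] have "a \<in> bad"
    using \<open>E \<subseteq> S\<close> \<open>\<alpha> \<noteq> 0\<close> \<open>0 < a\<close> \<open>a < t\<close> \<open>t \<le> 1\<close> assms
    by (auto simp: bad_def b_def power_mult_distrib)
  with good \<open>0 < a\<close> \<open>a < t\<close> show False
    by auto
qed

end
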